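(* Let $X$ be a Hausdorff topological space and $(U_i)_{i\in I}$ a family of open subsets of $X$. Say a family $(W_j)_{j\in J}$ of open subsets of $X$ has property ( * ) if for all $j,k\in J$ with $W_j\cap W_k\neq\emptyset$ there exists $i\in I$ with $W_j\cup W_k\subseteq U_i$. (a) If $X$ is regular, $M$ is a compact subset of $X$ and $(U_i)_{i\in I}$ covers $M$, then there is a cover $(W_j)_{j\in J}$ of $M$ by open subsets of $X$ with property ( * ). (b) If $X$ is paracompact and $(U_i)_{i\in I}$ covers $X$, then there is an open cover $(W_j)_{j\in J}$ of $X$ with property ( * ). (c) If $X$ is paracompact, $M$ is a closed subset of $X$ and $(U_i)_{i\in I}$ covers $M$, then there is a cover $(W_j)_{j\in J}$ of $M$ by open subsets of $X$ with property ( * ). (d) If $M$ is a locally closed subset of $X$ (i.e., each point of $M$ has a neighborhood $U$ in $X$ with $U\cap M$ relatively closed in $U$), every open neighborhood of $M$ in $X$ contains a paracompact open neighborhood of $M$ in $X$, and $(U_i)_{i\in I}$ covers $M$, then there is a cover $(W_j)_{j\in J}$ of $M$ by open subsets of $X$ with property ( * ). *)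

theory Defs
  imports "HOL-Analysis.Analysis"
begin

definition paracompact_space :: "'a topology \<Rightarrow> bool" where
  "paracompact_space X \<longleftrightarrow>
     (\<forall>\<U>. (\<forall>U\<in>\<U>. openin X U) \<and> \<Union>\<U> = topspace X \<longrightarrow>
        (\<exists>\<V>. (\<forall>V\<in>\<V>. openin X V) \<and> \<Union>\<V> = topspace X \<and> locally_finite_in X \<V> \<and>
              (\<forall>V\<in>\<V>. \<exists>U\<in>\<U>. V \<subseteq> U)))"

definition locally_closed_in :: "'a topology \<Rightarrow> 'a set \<Rightarrow> bool" where
  "locally_closed_in X M \<longleftrightarrow> M \<subseteq> topspace X \<and>
     (\<forall>x\<in>M. \<exists>N. (\<exists>G. openin X G \<and> x \<in> G \<and> G \<subseteq> N) \<and> N \<subseteq> topspace X \<and>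
                 closedin (subtopology X N) (N \<inter> M))"

definition star_property :: "'a topology \<Rightarrow> 'i set \<Rightarrow> ('i \<Rightarrow> 'a set) \<Rightarrow> 'a set set \<Rightarrow> bool" where
  "star_property X I U \<W> \<longleftrightarrow>
     (\<forall>W\<in>\<W>. openin X W) \<and>
     (\<forall>A\<in>\<W>. \<forall>B\<in>\<W>. A \<inter> B \<noteq> {} \<longrightarrow> (\<exists>i\<in>I. A \<union> B \<subseteq> U i))"

end

(*
  Let \<G> be a locally finite open family with X closure_of G \<subseteq> c G for each G. For a point x put
    W x = \<Union>\<G> \<inter> \<Inter>{c G | x \<in> closure G} - \<Union>{closure G | x \<notin> closure G}.
  Local finiteness makes W x open (a finite intersection of open sets minus a closed set). If W x
  and W y share a point of some G, then x and y both lie in the closure of G, because W x avoids the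
  closures not containing x; hence W x \<union> W y \<subseteq> c G.
  Such a family \<G> is obtained by shrinking the U i so that closures stay inside (regularity; a
  paracompact Hausdorff space is regular) and then passing to a finite subcover of M in (a), or to a
  locally finite refinement in (b). For (c) apply (b) to the cover enlarged by topspace X - M and keep
  the sets meeting M; for (d) apply (c) inside a paracompact open neighbourhood in which M is closed.
*)
theory Submission imports Defs begin

lemma star_property_mono:
  assumes "star_property X J V \<W>" and "\<forall>j\<in>J. \<exists>i\<in>I. V j \<subseteq> U i"
  shows "star_property X I U \<W>"
  using assms unfolding star_property_def by (meson order_trans)

lemma star_property_subtopology:
  assumes "openin X S" and "star_property (subtopology X S) I U \<W>"
  shows "star_property X I U \<W>"
  using assms openin_trans_full unfolding star_property_def by blast

lemma locally_finite_in_finite_closures_at: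
  assumes "locally_finite_in X \<A>" and "x \<in> topspace X"
  shows "finite {A\<in>\<A>. x \<in> X closure_of A}"
proof -
  obtain V where V: "openin X V" "x \<in> V" "finite {A\<in>\<A>. A \<inter> V \<noteq> {}}"
    using assms unfolding locally_finite_in_def by blast
  have "{A\<in>\<A>. x \<in> X closure_of A} \<subseteq> {A\<in>\<A>. A \<inter> V \<noteq> {}}"
    using V(1,2) openin_Int_closure_of_eq_empty by blast
  then show ?thesis
    using V(3) finite_subset by blast
qed

lemma locally_finite_star_refinement:
  assumes lf: "locally_finite_in X \<G>" and opn: "\<forall>G\<in>\<G>. openin X G"
    and c: "\<forall>G\<in>\<G>. openin X (c G) \<and> X closure_of G \<subseteq> c G"
  obtains \<W> where "star_property X \<G> c \<W>" and "\<Union>\<W> = \<Union>\<G>"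
proof -
  define W where "W x = \<Union>\<G> \<inter> \<Inter> (c ` {G\<in>\<G>. x \<in> X closure_of G})
      \<inter> (topspace X - \<Union> ((\<lambda>G. X closure_of G) ` {G\<in>\<G>. x \<notin> X closure_of G}))" for x
  have memW: "z \<in> W x \<longleftrightarrow> z \<in> \<Union>\<G> \<and> (\<forall>G\<in>\<G>. x \<in> X closure_of G \<longrightarrow> z \<in> c G)
     \<and> z \<in> topspace X \<and> (\<forall>G\<in>\<G>. x \<notin> X closure_of G \<longrightarrow> z \<notin> X closure_of G)" for z x
    by (simp add: W_def) blast
  have sub: "\<Union>\<G> \<subseteq> topspace X"
    using lf by (simp add: locally_finite_in_def)
  have openW: "openin X (W x)" if "x \<in> \<Union>\<G>" for x
  proof -
    have open_Inter: "openin X (\<Union>\<G> \<inter> \<Inter> (c ` {G\<in>\<G>. x \<in> X closure_of G}))"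
    proof (cases "{G\<in>\<G>. x \<in> X closure_of G} = {}")
      case True
      show ?thesis
        unfolding True using opn by (simp add: openin_Union)
    next
      case False
      moreover have "finite {G\<in>\<G>. x \<in> X closure_of G}"
        using locally_finite_in_finite_closures_at[OF lf] that sub by blast
      ultimately show ?thesis
        using opn c by (intro openin_Int openin_Union openin_Inter) auto
    qed
    have "closedin X (\<Union> ((\<lambda>G. X closure_of G) ` {G\<in>\<G>. x \<notin> X closure_of G}))"
      by (rule closedin_Union_locally_finite_closure, rule locally_finite_in_subset[OF lf]) auto
    then show ?thesis
      unfolding W_def by (rule openin_Int[OF open_Inter openin_diff[OF openin_topspace]])
  qed
  have inW: "x \<in> W x" if "x \<in> \<Union>\<G>" for x
    unfolding memW using that sub c by blast
  have W_sub: "W x \<subseteq> \<Union>\<G>" for x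
    using memW by blast
  have W_sub_c: "W x \<subseteq> c G" if "G \<in> \<G>" "z \<in> G" "z \<in> W x" for x z G
  proof -
    have "z \<in> X closure_of G"
      using that sub by (meson closure_of_subset Union_upper subsetD subset_trans)
    then have "x \<in> X closure_of G"
      using that memW by blast
    then show ?thesis
      using that(1) memW by blast
  qed
  show thesis
  proof
    show "\<Union> (W ` \<Union>\<G>) = \<Union>\<G>"
      using inW W_sub by blast
    show "star_property X \<G> c (W ` \<Union>\<G>)"
      unfolding star_property_def
    proof (intro conjI ballI impI)
      show "openin X A" if "A \<in> W ` \<Union>\<G>" for A
        using that openW by blast
      fix A B assume "A \<in> W ` \<Union>\<G>" "B \<in> W ` \<Union>\<G>" "A \<inter> B \<noteq> {}"
      then obtain x y z where xy: "A = W x" "B = W y" and z: "z \<in> W x" "z \<in> W y"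
        by blast
      then obtain G where G: "G \<in> \<G>" "z \<in> G"
        using W_sub by blast
      then have "W x \<union> W y \<subseteq> c G"
        using W_sub_c z by blast
      then show "\<exists>G\<in>\<G>. A \<union> B \<subseteq> c G"
        using G(1) xy by blast
    qed
  qed
qed

lemma locally_finite_closure_star_refinement:
  assumes "locally_finite_in X \<V>" and "\<forall>V\<in>\<V>. openin X V" and "\<forall>i\<in>I. openin X (U i)"
    and "\<forall>V\<in>\<V>. \<exists>i\<in>I. X closure_of V \<subseteq> U i"
  obtains \<W> where "star_property X I U \<W>" and "\<Union>\<W> = \<Union>\<V>"
proof -
  obtain f where f: "\<forall>V\<in>\<V>. f V \<in> I \<and> X closure_of V \<subseteq> U (f V)"
    using bchoice[OF assms(4)[unfolded Bex_def]] by blast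
  then have "\<forall>V\<in>\<V>. openin X ((U \<circ> f) V) \<and> X closure_of V \<subseteq> (U \<circ> f) V"
    using assms(3) by auto
  then obtain \<W> where \<W>: "star_property X \<V> (U \<circ> f) \<W>" "\<Union>\<W> = \<Union>\<V>"
    by (rule locally_finite_star_refinement[OF assms(1,2)])
  have "star_property X I U \<W>"
    by (rule star_property_mono[OF \<W>(1)]) (use f in auto)
  then show thesis
    using \<W>(2) by (rule that)
qed

lemma regular_space_closure_shrinking_cover:
  assumes "regular_space X" and "\<forall>i\<in>I. openin X (U i)" and "S \<subseteq> (\<Union>i\<in>I. U i)"
  shows "S \<subseteq> \<Union>{G. openin X G \<and> (\<exists>i\<in>I. X closure_of G \<subseteq> U i)}"
proof
  fix x assume "x \<in> S"
  then obtain i where i: "i \<in> I" "x \<in> U i"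
    using assms(3) by blast
  then have "closedin X (topspace X - U i)" "x \<in> topspace X - (topspace X - U i)"
    using assms(2) openin_subset by fastforce+
  then obtain G where "openin X G" "x \<in> G" "disjnt (topspace X - U i) (X closure_of G)"
    using assms(1) unfolding regular_space by blast
  then show "x \<in> \<Union>{G. openin X G \<and> (\<exists>i\<in>I. X closure_of G \<subseteq> U i)}"
    using i closure_of_subset_topspace[of X G] by (auto simp: disjnt_iff)
qed

lemma paracompact_space_locally_finite_refinement:
  assumes "paracompact_space X" and "\<forall>U\<in>\<U>. openin X U" and "topspace X \<subseteq> \<Union>\<U>"
  obtains \<V> where "\<forall>V\<in>\<V>. openin X V" "\<Union>\<V> = topspace X" "locally_finite_in X \<V>"
    "\<forall>V\<in>\<V>. \<exists>U\<in>\<U>. V \<subseteq> U"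
proof -
  have "\<Union>\<U> = topspace X"
    using assms(2,3) openin_subset by blast
  from paracompact_space_def[THEN iffD1, OF assms(1), rule_format, OF conjI[OF assms(2) this]]
  show thesis
    by (elim exE conjE) (rule that; assumption)
qed

lemma paracompact_imp_regular_space:
  assumes P: "paracompact_space X" and H: "Hausdorff_space X"
  shows "regular_space X"
  unfolding regular_space_def
proof (intro allI impI)
  fix C a assume Ca: "closedin X C \<and> a \<in> topspace X - C"
  define \<U> where "\<U> = insert (topspace X - C) {Q. openin X Q \<and> a \<notin> X closure_of Q}"
  have "\<forall>U\<in>\<U>. openin X U"
    using Ca unfolding \<U>_def by auto
  moreover have "topspace X \<subseteq> \<Union>\<U>"
  proof
    fix c assume c: "c \<in> topspace X"
    show "c \<in> \<Union>\<U>"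
    proof (cases "c \<in> C")
      case True
      then have "c \<noteq> a" "a \<in> topspace X"
        using Ca by auto
      then have "\<exists>Q P. openin X Q \<and> openin X P \<and> c \<in> Q \<and> a \<in> P \<and> disjnt Q P"
        using H c unfolding Hausdorff_space_def by simp
      then obtain Q P where QP: "openin X Q" "openin X P" "c \<in> Q" "a \<in> P" "disjnt Q P"
        by blast
      then have "P \<inter> X closure_of Q = {}"
        using openin_Int_closure_of_eq_empty[OF QP(2), of Q] by (simp add: disjnt_def Int_commute)
      then show ?thesis
        using QP unfolding \<U>_def by auto
    next
      case False
      then show ?thesis
        using c unfolding \<U>_def by auto
    qed
  qed
  ultimately obtain \<V> where V: "\<forall>V\<in>\<V>. openin X V" "\<Union>\<V> = topspace X"
    "locally_finite_in X \<V>" "\<forall>V\<in>\<V>. \<exists>U\<in>\<U>. V \<subseteq> U"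
    by (rule paracompact_space_locally_finite_refinement[OF P])
  \<comment> \<open>the members of \<open>\<V>\<close> meeting \<open>C\<close> cover \<open>C\<close>, and by local finiteness their union has closure missing \<open>a\<close>\<close>
  define \<V>' where "\<V>' = {V\<in>\<V>. V \<inter> C \<noteq> {}}"
  define S where "S = \<Union>\<V>'"
  have "C \<subseteq> S"
  proof
    fix y assume "y \<in> C"
    moreover obtain V where "V \<in> \<V>" "y \<in> V"
      using V(2) Ca closedin_subset \<open>y \<in> C\<close> by blast
    ultimately show "y \<in> S"
      unfolding S_def \<V>'_def by blast
  qed
  have "openin X S"
    unfolding S_def by (rule openin_Union) (use V(1) in \<open>simp add: \<V>'_def\<close>)
  have "a \<notin> X closure_of V" if V': "V \<in> \<V>'" for V
  proof -
    obtain U where U: "U \<in> \<U>" "V \<subseteq> U"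
      using V(4) V' unfolding \<V>'_def by blast
    then have "U \<noteq> topspace X - C"
      using V' unfolding \<V>'_def by blast
    then have "a \<notin> X closure_of U"
      using U(1) unfolding \<U>_def by simp
    then show ?thesis
      using closure_of_mono[OF U(2)] by blast
  qed
  moreover have "X closure_of S = \<Union> ((\<lambda>V. X closure_of V) ` \<V>')"
    unfolding S_def
    by (rule closure_of_locally_finite_Union, rule locally_finite_in_subset[OF V(3)])
      (simp add: \<V>'_def)
  ultimately have "a \<notin> X closure_of S"
    by blast
  show "\<exists>U V. openin X U \<and> openin X V \<and> a \<in> U \<and> C \<subseteq> V \<and> disjnt U V"
  proof (intro exI conjI)
    show "openin X (topspace X - X closure_of S)"
      by (simp add: openin_diff)
    show "a \<in> topspace X - X closure_of S"
      using Ca \<open>a \<notin> X closure_of S\<close> by blast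
    show "disjnt (topspace X - X closure_of S) S"
      using closure_of_subset[OF openin_subset[OF \<open>openin X S\<close>]] by (auto simp: disjnt_def)
  qed fact+
qed

lemma compactin_star_refinement:
  assumes "regular_space X" and "compactin X M"
    and "\<forall>i\<in>I. openin X (U i)" and "M \<subseteq> (\<Union>i\<in>I. U i)"
  obtains \<W> where "star_property X I U \<W>" and "M \<subseteq> \<Union>\<W>"
proof -
  let ?\<G> = "{G. openin X G \<and> (\<exists>i\<in>I. X closure_of G \<subseteq> U i)}"
  have "M \<subseteq> \<Union>?\<G>"
    using regular_space_closure_shrinking_cover[OF assms(1,3,4)] .
  then have "\<exists>\<V>. finite \<V> \<and> \<V> \<subseteq> ?\<G> \<and> M \<subseteq> \<Union>\<V>"
    by (rule compactinD[OF assms(2), rotated]) simp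
  then obtain \<V> where \<V>: "finite \<V>" "\<V> \<subseteq> ?\<G>" "M \<subseteq> \<Union>\<V>"
    by blast
  have opn: "\<forall>V\<in>\<V>. openin X V"
    using \<V>(2) by blast
  then have lf: "locally_finite_in X \<V>"
    using \<V>(1) openin_subset by (intro finite_imp_locally_finite_in) blast+
  have "\<forall>V\<in>\<V>. \<exists>i\<in>I. X closure_of V \<subseteq> U i"
    using \<V>(2) by blast
  then obtain \<W> where \<W>: "star_property X I U \<W>" "\<Union>\<W> = \<Union>\<V>"
    by (rule locally_finite_closure_star_refinement[OF lf opn assms(3)])
  show thesis
    using \<W>(1) \<V>(3)[folded \<W>(2)] by (rule that)
qed

lemma paracompact_star_refinement:
  assumes "paracompact_space X" and "Hausdorff_space X"
    and "\<forall>i\<in>I. openin X (U i)" and "topspace X \<subseteq> (\<Union>i\<in>I. U i)"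
  obtains \<W> where "star_property X I U \<W>" and "\<Union>\<W> = topspace X"
proof -
  let ?\<G> = "{G. openin X G \<and> (\<exists>i\<in>I. X closure_of G \<subseteq> U i)}"
  have "\<forall>G\<in>?\<G>. openin X G"
    by blast
  moreover have "topspace X \<subseteq> \<Union>?\<G>"
    using regular_space_closure_shrinking_cover[OF paracompact_imp_regular_space[OF assms(1,2)]]
      assms(3,4) .
  ultimately obtain \<V> where \<V>: "\<forall>V\<in>\<V>. openin X V" "\<Union>\<V> = topspace X" "locally_finite_in X \<V>"
    "\<forall>V\<in>\<V>. \<exists>G\<in>?\<G>. V \<subseteq> G"
    by (rule paracompact_space_locally_finite_refinement[OF assms(1)])
  have "\<forall>V\<in>\<V>. \<exists>i\<in>I. X closure_of V \<subseteq> U i"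
    using \<V>(4) closure_of_mono by fastforce
  then obtain \<W> where "star_property X I U \<W>" "\<Union>\<W> = \<Union>\<V>"
    by (rule locally_finite_closure_star_refinement[OF \<V>(3,1) assms(3)])
  then show thesis
    using that \<V>(2) by simp
qed

lemma paracompact_closedin_star_refinement:
  assumes "paracompact_space X" and "Hausdorff_space X" and "closedin X M"
    and "\<forall>i\<in>I. openin X (U i)" and "M \<subseteq> (\<Union>i\<in>I. U i)"
  obtains \<W> where "star_property X I U \<W>" and "M \<subseteq> \<Union>\<W>"
proof -
  let ?\<U> = "insert (topspace X - M) (U ` I)"
  have "\<forall>V\<in>?\<U>. openin X (id V)"
    using assms(3,4) by auto
  moreover have "topspace X \<subseteq> (\<Union>V\<in>?\<U>. id V)"
    using assms(5) by auto
  ultimately obtain \<W> where \<W>: "star_property X ?\<U> id \<W>" "\<Union>\<W> = topspace X"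
    by (rule paracompact_star_refinement[OF assms(1,2)])
  have "star_property X I U {W\<in>\<W>. W \<inter> M \<noteq> {}}"
    unfolding star_property_def
  proof (intro conjI ballI impI)
    show "openin X W" if "W \<in> {W\<in>\<W>. W \<inter> M \<noteq> {}}" for W
      using that \<W>(1) unfolding star_property_def by blast
    fix A B assume A: "A \<in> {W\<in>\<W>. W \<inter> M \<noteq> {}}" and "B \<in> {W\<in>\<W>. W \<inter> M \<noteq> {}}"
      and "A \<inter> B \<noteq> {}"
    then obtain V where V: "V \<in> ?\<U>" "A \<union> B \<subseteq> V"
      using \<W>(1) unfolding star_property_def id_def by blast
    moreover have "V \<noteq> topspace X - M"
      using A V(2) by blast
    ultimately show "\<exists>i\<in>I. A \<union> B \<subseteq> U i"
      by blast
  qed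
  moreover have "M \<subseteq> \<Union>{W\<in>\<W>. W \<inter> M \<noteq> {}}"
    using \<W>(2) closedin_subset[OF assms(3)] by blast
  ultimately show thesis
    using that by blast
qed

lemma locally_closed_in_imp_closedin_open_nbhd:
  assumes "locally_closed_in X M"
  obtains V where "openin X V" "M \<subseteq> V" "closedin (subtopology X V) M"
proof -
  define \<G> where "\<G> = {G. openin X G \<and> (\<exists>C. closedin X C \<and> G \<inter> M = C \<inter> G)}"
  define V where "V = \<Union>\<G>"
  have "M \<subseteq> V"
  proof
    fix x assume "x \<in> M"
    then obtain N G where "openin X G" "x \<in> G" "G \<subseteq> N" "closedin (subtopology X N) (N \<inter> M)"
      using assms unfolding locally_closed_in_def by blast
    then obtain C where "closedin X C" "N \<inter> M = C \<inter> N"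
      unfolding closedin_subtopology by blast
    moreover have "G \<inter> M = C \<inter> G"
      using \<open>N \<inter> M = C \<inter> N\<close> \<open>G \<subseteq> N\<close> by blast
    ultimately have "G \<in> \<G>"
      using \<open>openin X G\<close> unfolding \<G>_def by blast
    then show "x \<in> V"
      using \<open>x \<in> G\<close> unfolding V_def by blast
  qed
  have "openin X V"
    unfolding V_def by (rule openin_Union) (simp add: \<G>_def)
  have opn_diff: "openin X (G - M)" if G: "G \<in> \<G>" for G
  proof -
    obtain C where "openin X G" "closedin X C" "G \<inter> M = C \<inter> G"
      using G unfolding \<G>_def by blast
    then have "G - M = G - C" "openin X (G - C)"
      by (auto simp: openin_diff)
    then show ?thesis
      by simp
  qed
  have "V - M = (\<Union>G\<in>\<G>. G - M)"
    unfolding V_def by blast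
  also have "openin X \<dots>"
    by (rule openin_Union) (use opn_diff in blast)
  finally have "openin X (V - M)" .
  then have "closedin X (topspace X - (V - M))"
    by (simp add: closedin_diff)
  moreover have "M = (topspace X - (V - M)) \<inter> V"
    using \<open>M \<subseteq> V\<close> openin_subset[OF \<open>openin X V\<close>] by blast
  ultimately have "closedin (subtopology X V) M"
    unfolding closedin_subtopology by blast
  with \<open>openin X V\<close> \<open>M \<subseteq> V\<close> show thesis
    by (rule that)
qed

lemma locally_closed_star_refinement:
  assumes "Hausdorff_space X" and "locally_closed_in X M"
    and para: "\<forall>V. openin X V \<and> M \<subseteq> V \<longrightarrow>
      (\<exists>V'. openin X V' \<and> M \<subseteq> V' \<and> V' \<subseteq> V \<and> paracompact_space (subtopology X V'))"
    and "\<forall>i\<in>I. openin X (U i)" and "M \<subseteq> (\<Union>i\<in>I. U i)"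
  obtains \<W> where "star_property X I U \<W>" and "M \<subseteq> \<Union>\<W>"
proof -
  obtain V where V: "openin X V" "M \<subseteq> V" "closedin (subtopology X V) M"
    using locally_closed_in_imp_closedin_open_nbhd[OF assms(2)] .
  obtain V' where V': "openin X V'" "M \<subseteq> V'" "V' \<subseteq> V"
    "paracompact_space (subtopology X V')"
    using para[rule_format, of V] V(1,2) by blast
  obtain C where C: "closedin X C" "M = C \<inter> V"
    using V(3) unfolding closedin_subtopology by blast
  then have "M = C \<inter> V'"
    using V'(2,3) by blast
  then have "closedin (subtopology X V') M"
    unfolding closedin_subtopology using C(1) by blast
  moreover have "\<forall>i\<in>I. openin (subtopology X V') (U i \<inter> V')"
    using assms(4) by (simp add: openin_subtopology_Int)
  moreover have "M \<subseteq> (\<Union>i\<in>I. U i \<inter> V')"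
    using assms(5) V'(2) by blast
  ultimately obtain \<W> where \<W>: "star_property (subtopology X V') I (\<lambda>i. U i \<inter> V') \<W>" "M \<subseteq> \<Union>\<W>"
    by (rule paracompact_closedin_star_refinement[OF V'(4) Hausdorff_space_subtopology[OF assms(1)]])
  have "star_property X I U \<W>"
    by (rule star_property_mono[OF star_property_subtopology[OF V'(1) \<W>(1)]]) blast
  then show thesis
    using that \<W>(2) by blast
qed

theorem lemma2p1:
  fixes X :: "'a topology" and I :: "'i set" and U :: "'i \<Rightarrow> 'a set"
  assumes "Hausdorff_space X"
    and "\<forall>i\<in>I. openin X (U i)"
  shows
    "(\<forall>M. regular_space X \<and> compactin X M \<and> M \<subseteq> (\<Union>i\<in>I. U i) \<longrightarrow>
        (\<exists>\<W>. star_property X I U \<W> \<and> M \<subseteq> \<Union>\<W>))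
     \<and> (paracompact_space X \<and> topspace X \<subseteq> (\<Union>i\<in>I. U i) \<longrightarrow>
        (\<exists>\<W>. star_property X I U \<W> \<and> \<Union>\<W> = topspace X))
     \<and> (\<forall>M. paracompact_space X \<and> closedin X M \<and> M \<subseteq> (\<Union>i\<in>I. U i) \<longrightarrow>
        (\<exists>\<W>. star_property X I U \<W> \<and> M \<subseteq> \<Union>\<W>))
     \<and> (\<forall>M. locally_closed_in X M \<and>
            (\<forall>V. openin X V \<and> M \<subseteq> V \<longrightarrow>
               (\<exists>V'. openin X V' \<and> M \<subseteq> V' \<and> V' \<subseteq> V \<and> paracompact_space (subtopology X V'))) \<and>
            M \<subseteq> (\<Union>i\<in>I. U i) \<longrightarrow>
        (\<exists>\<W>. star_property X I U \<W> \<and> M \<subseteq> \<Union>\<W>))"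
proof (intro conjI allI impI; elim conjE)
  show "\<exists>\<W>. star_property X I U \<W> \<and> M \<subseteq> \<Union>\<W>"
    if "regular_space X" "compactin X M" "M \<subseteq> (\<Union>i\<in>I. U i)" for M
    by (rule compactin_star_refinement[OF that(1,2) assms(2) that(3)]) blast
  show "\<exists>\<W>. star_property X I U \<W> \<and> \<Union>\<W> = topspace X"
    if "paracompact_space X" "topspace X \<subseteq> (\<Union>i\<in>I. U i)"
    by (rule paracompact_star_refinement[OF that(1) assms that(2)]) blast
  show "\<exists>\<W>. star_property X I U \<W> \<and> M \<subseteq> \<Union>\<W>"
    if "paracompact_space X" "closedin X M" "M \<subseteq> (\<Union>i\<in>I. U i)" for M
    by (rule paracompact_closedin_star_refinement[OF that(1) assms(1) that(2) assms(2) that(3)]) blast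
  show "\<exists>\<W>. star_property X I U \<W> \<and> M \<subseteq> \<Union>\<W>"
    if "locally_closed_in X M" "\<forall>V. openin X V \<and> M \<subseteq> V \<longrightarrow>
      (\<exists>V'. openin X V' \<and> M \<subseteq> V' \<and> V' \<subseteq> V \<and> paracompact_space (subtopology X V'))"
      "M \<subseteq> (\<Union>i\<in>I. U i)" for M
    by (rule locally_closed_star_refinement[OF assms(1) that(1,2) assms(2) that(3)]) blast
qed

end
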